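(* Let $N,t\in\mathbb{Z}^+$ with $t\le N$, and let $\boldsymbol{\mu}\in\mathbb{R}_+^N$ satisfy $0<\mu[n]\le1$ for all $n$ and $\sum_{n=1}^N\mu[n]=t$. Run the following procedure: set $\boldsymbol{m}\leftarrow\boldsymbol{\mu}$, $F\leftarrow0$; while $\boldsymbol{m}$ has a nonzero entry: $F\leftarrow F+1$; $t'\leftarrow\sum_n m[n]$; let $\ell[1],\ldots,\ell[N']$ be the indices of the nonzero entries of $\boldsymbol{m}$ ordered so that $m[\ell[1]]\le\cdots\le m[\ell[N']]$; set $\mathcal{N}_F\leftarrow\{\ell[1],\ell[N'-t+2],\ldots,\ell[N']\}$; if $N'\ge t+1$ set $\alpha_F\leftarrow\min\big(\frac{t'}{t}-m[\ell[N'-t+1]],\,m[\ell[1]]\big)$, otherwise set $\alpha_F\leftarrow m[\ell[1]]$; then subtract $\alpha_F$ from $m[n]$ for every $n\in\mathcal{N}_F$. Then this loop terminates with $\boldsymbol{m}=\boldsymbol{0}$ after at most $N$ iterations (i.e., the final $F$ satisfies $F\le N$).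
   Context: This is the storage placement procedure ("Algorithm 1") for heterogeneous storage-constrained PIR: $\boldsymbol{\mu}$ is the vector of normalized database storage capacities, $t$ their sum, and each iteration $f$ assigns a sub-message set of normalized size $\alpha_f$ to the $t$ databases in $\mathcal{N}_f$ (the database with the smallest remaining nonzero storage and the $t-1$ with the largest remaining storage). *)

theory Defs
  imports Complex_Main
begin

text \<open>Databases are indexed 0..N-1 (paper: 1..N). A state is m :: nat => real; only
  entries with index < N are relevant.\<close>

definition supp_idx :: "nat \<Rightarrow> (nat \<Rightarrow> real) \<Rightarrow> nat set" where
  "supp_idx N m = {n. n < N \<and> m n \<noteq> 0}"

definition nonzero_state :: "nat \<Rightarrow> (nat \<Rightarrow> real) \<Rightarrow> bool" where
  "nonzero_state N m \<longleftrightarrow> (\<exists>n<N. m n \<noteq> 0)"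

text \<open>One iteration of Algorithm 1 with a chosen ordering l of the nonzero indices
  (0-based: l!0 = l[1]). Ties in the ordering may be broken arbitrarily; the step
  is only defined when the index l[N'-t+2] makes sense, i.e. t <= N'.\<close>
definition alg_step_with ::
  "nat \<Rightarrow> nat \<Rightarrow> (nat \<Rightarrow> real) \<Rightarrow> nat list \<Rightarrow> (nat \<Rightarrow> real) \<Rightarrow> bool" where
  "alg_step_with N t m l m' \<longleftrightarrow>
     nonzero_state N m \<and>
     distinct l \<and> set l = supp_idx N m \<and> sorted (map m l) \<and>
     t \<le> length l \<and>
     (let N' = length l;
          t' = (\<Sum>n<N. m n);
          NF = {l ! 0} \<union> {l ! j | j. N' + 1 \<le> j + t \<and> j < N'};
          \<alpha> = (if N' \<ge> t + 1 then min (t' / real t - m (l ! (N' - t))) (m (l ! 0))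
               else m (l ! 0))
      in m' = (\<lambda>n. if n \<in> NF then m n - \<alpha> else m n))"

definition alg_step :: "nat \<Rightarrow> nat \<Rightarrow> (nat \<Rightarrow> real) \<Rightarrow> (nat \<Rightarrow> real) \<Rightarrow> bool" where
  "alg_step N t m m' \<longleftrightarrow> (\<exists>l. alg_step_with N t m l m')"

definition alg_run ::
  "nat \<Rightarrow> nat \<Rightarrow> (nat \<Rightarrow> real) \<Rightarrow> (nat \<Rightarrow> nat \<Rightarrow> real) \<Rightarrow> nat \<Rightarrow> bool" where
  "alg_run N t \<mu> f k \<longleftrightarrow> f 0 = \<mu> \<and> (\<forall>i<k. alg_step N t (f i) (f (Suc i)))"

end

theory Submission
  imports Defs
begin

text \<open>Write \<open>s\<close> for the current total storage. The algorithm keeps the state \<^emph>\<open>balanced\<close>: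
  every entry lies in \<open>[0, s/t]\<close>. A balanced nonzero state has at least \<open>t\<close> nonzero entries, so
  the next iteration is defined. An index is \<^emph>\<open>settled\<close> when its entry is \<open>0\<close> or \<open>s/t\<close>;
  a settled index stays settled, since the \<open>t\<close> chosen databases include every entry equal
  to \<open>s/t\<close> and no zero entry. Each iteration either empties the state or, by the choice of
  \<open>\<alpha>\<close>, settles the smallest entry or the \<open>(N'-t+1)\<close>-st one, both of which were unsettled.
  Hence after \<open>i\<close> non-final iterations at least \<open>i\<close> indices are settled while two are not,
  which bounds the number of iterations by \<open>N\<close>.\<close>

definition balanced :: "nat \<Rightarrow> nat \<Rightarrow> (nat \<Rightarrow> real) \<Rightarrow> bool" where
  "balanced N t m \<longleftrightarrow> (\<forall>n<N. 0 \<le> m n \<and> real t * m n \<le> (\<Sum>i<N. m i))"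

definition settled :: "nat \<Rightarrow> nat \<Rightarrow> (nat \<Rightarrow> real) \<Rightarrow> nat set" where
  "settled N t m = {n. n < N \<and> (m n = 0 \<or> real t * m n = (\<Sum>i<N. m i))}"

lemma finite_settled: "finite (settled N t m)"
  unfolding settled_def by auto

lemma finite_supp_idx: "finite (supp_idx N m)"
  unfolding supp_idx_def by auto

lemma sum_lessThan_eq_sum_supp_idx: "(\<Sum>n<N. m n) = sum m (supp_idx N m)"
  by (rule sum.mono_neutral_right) (auto simp: supp_idx_def)

lemma balanced_card_supp_idx_ge:
  assumes bal: "balanced N t m" and nz: "nonzero_state N m"
  shows "t \<le> card (supp_idx N m)"
proof -
  define S where "S = supp_idx N m"
  define s where "s = (\<Sum>n<N. m n)"
  obtain n where n: "n < N" "m n \<noteq> 0" using nz unfolding nonzero_state_def by auto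
  have "0 < m n" using bal n unfolding balanced_def by force
  also have "m n \<le> s" unfolding s_def
    by (rule member_le_sum) (use bal n in \<open>auto simp: balanced_def\<close>)
  finally have s_pos: "0 < s" .
  have "real t * s = (\<Sum>n\<in>S. real t * m n)"
    by (simp add: sum_distrib_left S_def s_def sum_lessThan_eq_sum_supp_idx)
  also have "\<dots> \<le> (\<Sum>n\<in>S. s)"
    by (rule sum_mono) (use bal in \<open>auto simp: balanced_def S_def supp_idx_def s_def\<close>)
  also have "\<dots> = real (card S) * s" by simp
  finally show ?thesis using s_pos by (simp add: S_def)
qed

lemma alg_step_exists:
  assumes "balanced N t m" and "nonzero_state N m"
  shows "\<exists>m'. alg_step N t m m'"
proof -
  define l where "l = sort_key m (sorted_list_of_set (supp_idx N m))"
  have l: "distinct l" "set l = supp_idx N m" "sorted (map m l)"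
    using finite_supp_idx by (auto simp: l_def sorted_sort_key)
  then have "length l = card (supp_idx N m)"
    by (metis distinct_card)
  with balanced_card_supp_idx_ge[OF assms] have "t \<le> length l" by simp
  with l assms(2) show ?thesis
    unfolding alg_step_def alg_step_with_def by (auto simp: Let_def)
qed

locale alg_iteration =
  fixes N t :: nat and m m' :: "nat \<Rightarrow> real" and l :: "nat list"
  assumes t_pos: "1 \<le> t"
    and balanced: "balanced N t m"
    and step: "alg_step_with N t m l m'"
begin

abbreviation N' :: nat where "N' \<equiv> length l"

definition c :: real where "c = (\<Sum>n<N. m n) / real t"

definition J :: "nat set" where "J = insert 0 {N' + 1 - t..<N'}"

definition \<alpha> :: real where
  "\<alpha> = (if N' \<ge> t + 1 then min (c - m (l ! (N' - t))) (m (l ! 0)) else m (l ! 0))"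

lemma sum_eq: "(\<Sum>n<N. m n) = real t * c"
  using t_pos by (simp add: c_def)

lemma distinct_l: "distinct l" and set_l: "set l = supp_idx N m"
  and sorted_l: "sorted (map m l)" and t_le_N': "t \<le> N'"
  and m'_eq: "m' = (\<lambda>n. if n \<in> (!) l ` J then m n - \<alpha> else m n)"
proof -
  have "{l ! 0} \<union> {l ! j | j. N' + 1 \<le> j + t \<and> j < N'} = (!) l ` J"
    unfolding J_def using t_pos by (auto; force)
  then show "distinct l" "set l = supp_idx N m" "sorted (map m l)" "t \<le> N'"
    "m' = (\<lambda>n. if n \<in> (!) l ` J then m n - \<alpha> else m n)"
    using step unfolding alg_step_with_def Let_def \<alpha>_def c_def by auto
qed

lemma N'_pos: "0 < N'"
  using t_le_N' t_pos by linarith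

lemma nth_supp: "j < N' \<Longrightarrow> l ! j \<in> supp_idx N m"
  using set_l nth_mem by blast

lemma nth_less_N: "j < N' \<Longrightarrow> l ! j < N"
  using nth_supp unfolding supp_idx_def by blast

lemma supp_pos: "n \<in> supp_idx N m \<Longrightarrow> 0 < m n"
  using balanced unfolding supp_idx_def balanced_def by force

lemma nth_pos: "j < N' \<Longrightarrow> 0 < m (l ! j)"
  using nth_supp supp_pos by blast

lemma nonneg: "n < N \<Longrightarrow> 0 \<le> m n"
  using balanced unfolding balanced_def by auto

lemma le_c: "n < N \<Longrightarrow> m n \<le> c"
  using balanced t_pos unfolding balanced_def sum_eq by auto

lemma nth_mono: "i \<le> j \<Longrightarrow> j < N' \<Longrightarrow> m (l ! i) \<le> m (l ! j)"
  using sorted_nth_mono[OF sorted_l] by simp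

lemma nth_eq_iff: "i < N' \<Longrightarrow> j < N' \<Longrightarrow> l ! i = l ! j \<longleftrightarrow> i = j"
  using distinct_l nth_eq_iff_index_eq by blast

lemma supp_eq_image: "supp_idx N m = (!) l ` {..<N'}"
  unfolding set_l[symmetric] by (auto simp: in_set_conv_nth)

lemma inj_nth: "inj_on ((!) l) {..<N'}"
  by (rule inj_on_nth) (use distinct_l in auto)

lemma sum_nth: "(\<Sum>j<N'. m (l ! j)) = real t * c"
proof -
  have "(\<Sum>j<N'. m (l ! j)) = sum m (supp_idx N m)"
    by (simp add: supp_eq_image sum.reindex[OF inj_nth])
  then show ?thesis by (simp add: sum_lessThan_eq_sum_supp_idx[symmetric] sum_eq)
qed

lemma J_subset: "J \<subseteq> {..<N'}"
  unfolding J_def using N'_pos by auto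

lemma card_chosen: "card ((!) l ` J) = t"
proof -
  have "card J = t" unfolding J_def using t_pos t_le_N' by auto
  then show ?thesis using card_image[OF inj_on_subset[OF inj_nth J_subset]] by simp
qed

lemma chosen_subset_supp: "(!) l ` J \<subseteq> supp_idx N m"
  using J_subset supp_eq_image by auto

lemma sum_m': "(\<Sum>n<N. m' n) = real t * (c - \<alpha>)"
proof -
  have chosen: "{..<N} \<inter> (!) l ` J = (!) l ` J"
    using chosen_subset_supp unfolding supp_idx_def by auto
  have "(\<Sum>n<N. m' n) = (\<Sum>n<N. m n) - (\<Sum>n<N. if n \<in> (!) l ` J then \<alpha> else 0)"
    unfolding m'_eq by (simp add: sum_subtractf[symmetric] if_distrib cong: if_cong)
  also have "\<dots> = real t * c - real t * \<alpha>"
    by (simp add: sum.If_cases chosen card_chosen sum_eq)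
  finally show ?thesis by (simp add: algebra_simps)
qed

text \<open>With exactly \<open>t\<close> nonzero entries, balance forces all of them to equal \<open>c\<close>, and the
  iteration empties the state.\<close>
lemma last_iteration:
  assumes "N' = t"
  shows "\<not> nonzero_state N m'"
proof -
  have "J = {..<N'}" unfolding J_def using assms t_pos by auto
  then have chosen: "(!) l ` J = supp_idx N m" by (simp add: supp_eq_image)
  have all_c: "m n = c" if "n \<in> supp_idx N m" for n
  proof (rule ccontr)
    assume "m n \<noteq> c"
    with le_c that have "m n < c" unfolding supp_idx_def by force
    with that le_c have "sum m (supp_idx N m) < (\<Sum>n\<in>supp_idx N m. c)"
      by (intro sum_strict_mono_ex1 finite_supp_idx) (auto simp: supp_idx_def)
    also have "\<dots> = real t * c"
      using assms card_image[OF inj_nth] by (simp add: supp_eq_image)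
    finally show False by (simp add: sum_lessThan_eq_sum_supp_idx[symmetric] sum_eq)
  qed
  have "\<alpha> = c" unfolding \<alpha>_def using assms all_c nth_supp N'_pos by simp
  then have "m' n = 0" if "n < N" for n
    using that all_c chosen unfolding m'_eq supp_idx_def by auto
  then show ?thesis unfolding nonzero_state_def by simp
qed

end

text \<open>From here on \<open>p = N' - t\<close> (0-based), the position of \<open>\<ell>[N'-t+1]\<close>.\<close>
locale alg_iteration_proper = alg_iteration +
  assumes more_than_t: "t < N'"
begin

abbreviation p :: nat where "p \<equiv> N' - t"

lemma p_bounds: "1 \<le> p" "p < N'"
  using more_than_t t_pos by auto

lemma chosen_iff: "j < N' \<Longrightarrow> l ! j \<in> (!) l ` J \<longleftrightarrow> j = 0 \<or> p < j"
  using J_subset nth_eq_iff t_le_N' unfolding J_def by (auto 4 3)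

text \<open>Otherwise the \<open>t\<close> largest entries and the smallest one would sum to more than \<open>t c\<close>.\<close>
lemma nth_p_less_c: "m (l ! p) < c"
proof (rule ccontr)
  assume "\<not> m (l ! p) < c"
  then have ge: "c \<le> m (l ! j)" if "p \<le> j" "j < N'" for j
    using nth_mono[OF that] by simp
  have "m (l ! 0) + real t * c = m (l ! 0) + (\<Sum>j\<in>{p..<N'}. c)"
    using t_le_N' by (simp add: of_nat_diff)
  also have "\<dots> \<le> m (l ! 0) + (\<Sum>j\<in>{p..<N'}. m (l ! j))"
    using ge by (intro add_left_mono sum_mono) auto
  also have "\<dots> = (\<Sum>j\<in>insert 0 {p..<N'}. m (l ! j))"
    using p_bounds by (subst sum.insert) auto
  also have "\<dots> \<le> (\<Sum>j<N'. m (l ! j))"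
    by (rule sum_mono2) (use p_bounds nth_pos in \<open>auto intro: less_imp_le\<close>)
  finally show False using sum_nth nth_pos[OF N'_pos] by simp
qed

lemma \<alpha>_eq: "\<alpha> = min (c - m (l ! p)) (m (l ! 0))"
  using more_than_t unfolding \<alpha>_def by simp

lemma balanced': "balanced N t m'"
  unfolding balanced_def sum_m'
proof (intro allI impI conjI)
  fix n assume n: "n < N"
  show "0 \<le> m' n"
  proof (cases "n \<in> (!) l ` J")
    case True
    then obtain j where "j < N'" "n = l ! j" using J_subset by auto
    with True nth_mono[of 0 j] show ?thesis by (simp add: m'_eq \<alpha>_eq)
  qed (simp add: m'_eq nonneg n)
  show "real t * m' n \<le> real t * (c - \<alpha>)"
  proof (cases "n \<in> (!) l ` J")
    case True
    then show ?thesis using le_c[OF n] by (auto simp: m'_eq intro!: mult_left_mono)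
  next
    case False
    have "m n \<le> m (l ! p)"
    proof (cases "n \<in> supp_idx N m")
      case True
      then obtain j where j: "j < N'" "n = l ! j" using supp_eq_image by auto
      with False chosen_iff have "j \<le> p" by auto
      with j nth_mono p_bounds show ?thesis by simp
    next
      case False
      then show ?thesis using n nth_pos[OF p_bounds(2)] by (simp add: supp_idx_def)
    qed
    moreover have "\<alpha> \<le> c - m (l ! p)" by (simp add: \<alpha>_eq)
    ultimately show ?thesis using False by (simp add: m'_eq mult_left_mono)
  qed
qed

lemma settled_mono: "settled N t m \<subseteq> settled N t m'"
proof
  fix n assume "n \<in> settled N t m"
  then have n: "n < N" and "m n = 0 \<or> real t * m n = real t * c"
    unfolding settled_def sum_eq by auto
  then have "m n = 0 \<or> m n = c" using t_pos by auto
  then consider "m n = 0" | "m n \<noteq> 0" "m n = c" by blast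
  then show "n \<in> settled N t m'"
  proof cases
    case 1
    then have "n \<notin> (!) l ` J" using chosen_subset_supp supp_pos by force
    with 1 n show ?thesis by (simp add: settled_def m'_eq)
  next
    case 2
    then obtain j where j: "j < N'" "n = l ! j"
      using n supp_eq_image unfolding supp_idx_def by blast
    have "\<not> j \<le> p"
      using 2 j nth_mono[of j p] p_bounds nth_p_less_c by auto
    with j chosen_iff have "m' n = m n - \<alpha>" by (simp add: m'_eq)
    with 2 n show ?thesis by (simp add: settled_def sum_m')
  qed
qed

lemma nth_not_settled: "i \<le> p \<Longrightarrow> l ! i \<notin> settled N t m"
  using nth_pos[of i] nth_mono[of i p] p_bounds nth_p_less_c t_pos
  by (auto simp: settled_def sum_eq)

text \<open>Whichever term attains the minimum in \<open>\<alpha>\<close> names the entry that becomes settled.\<close>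
lemma newly_settled:
  obtains w where "w \<in> settled N t m'" "w \<notin> settled N t m"
proof (cases "\<alpha> = m (l ! 0)")
  case True
  have "l ! 0 \<in> (!) l ` J" using chosen_iff N'_pos by simp
  with True have "l ! 0 \<in> settled N t m'"
    using nth_less_N[OF N'_pos] by (simp add: settled_def m'_eq)
  with nth_not_settled[of 0] that show ?thesis by blast
next
  case False
  then have \<alpha>: "\<alpha> = c - m (l ! p)" using \<alpha>_eq by linarith
  have "l ! p \<notin> (!) l ` J" using chosen_iff p_bounds by simp
  with \<alpha> have "m' (l ! p) = c - \<alpha>" by (simp add: m'_eq)
  then have "l ! p \<in> settled N t m'"
    using nth_less_N[OF p_bounds(2)] by (simp add: settled_def sum_m')
  with nth_not_settled[of p] that show ?thesis by blast
qed

lemma card_settled_less: "card (settled N t m) < card (settled N t m')"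
  by (rule psubset_card_mono[OF finite_settled])
    (use settled_mono newly_settled in blast)

lemma card_settled_bound: "card (settled N t m) + 2 \<le> N"
proof -
  have two: "{l ! 0, l ! p} \<subseteq> {..<N}" "l ! 0 \<noteq> l ! p"
    using nth_less_N nth_eq_iff p_bounds N'_pos by auto
  have "settled N t m \<subseteq> {..<N} - {l ! 0, l ! p}"
    using nth_not_settled[of 0] nth_not_settled[of p] unfolding settled_def by auto
  then have "card (settled N t m) \<le> card ({..<N} - {l ! 0, l ! p})"
    by (intro card_mono) auto
  also have "\<dots> = N - 2"
    using two by (simp add: card_Diff_subset)
  moreover have "2 \<le> N"
    using two card_mono[OF finite_lessThan two(1)] by simp
  ultimately show ?thesis by linarith
qed

end

lemma alg_step_progress:
  assumes "1 \<le> t" and "balanced N t m" and "alg_step N t m m'"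
  shows "balanced N t m'"
    and "nonzero_state N m' \<Longrightarrow>
           card (settled N t m) < card (settled N t m') \<and> card (settled N t m) + 2 \<le> N"
proof -
  obtain l where step: "alg_step_with N t m l m'"
    using assms(3) unfolding alg_step_def by blast
  interpret alg_iteration N t m m' l
    using assms(1,2) step by unfold_locales
  consider "length l = t" | "t < length l" using t_le_N' by linarith
  then have "balanced N t m' \<and> (nonzero_state N m' \<longrightarrow>
      card (settled N t m) < card (settled N t m') \<and> card (settled N t m) + 2 \<le> N)"
  proof cases
    case 1
    with last_iteration show ?thesis
      by (auto simp: balanced_def nonzero_state_def)
  next
    case 2
    then interpret alg_iteration_proper N t m m' l by unfold_locales
    show ?thesis using balanced' card_settled_less card_settled_bound by blast
  qed
  then show "balanced N t m'"
    and "nonzero_state N m' \<Longrightarrow>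
           card (settled N t m) < card (settled N t m') \<and> card (settled N t m) + 2 \<le> N"
    by auto
qed

lemma alg_step_nonzero: "alg_step N t m m' \<Longrightarrow> nonzero_state N m"
  unfolding alg_step_def alg_step_with_def by auto

lemma alg_run_balanced:
  assumes "1 \<le> t" and "balanced N t \<mu>" and "alg_run N t \<mu> f k" and "i \<le> k"
  shows "balanced N t (f i)"
  using assms(4)
proof (induction i)
  case 0
  then show ?case using assms(2,3) by (simp add: alg_run_def)
next
  case (Suc i)
  then show ?case using alg_step_progress(1)[OF assms(1)] assms(3) by (simp add: alg_run_def)
qed

lemma alg_run_settled_growth:
  assumes "1 \<le> t" and "balanced N t \<mu>" and "alg_run N t \<mu> f k" and "Suc i < k"
  shows "card (settled N t (f i)) < card (settled N t (f (Suc i)))"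
    and "card (settled N t (f i)) + 2 \<le> N"
proof -
  have step: "alg_step N t (f i) (f (Suc i))"
    and "alg_step N t (f (Suc i)) (f (Suc (Suc i)))"
    using assms(3,4) by (simp_all add: alg_run_def)
  then have "nonzero_state N (f (Suc i))" by (intro alg_step_nonzero)
  with alg_step_progress(2)[OF assms(1) alg_run_balanced[OF assms(1-3)] step] assms(4)
  show "card (settled N t (f i)) < card (settled N t (f (Suc i)))"
    and "card (settled N t (f i)) + 2 \<le> N"
    by simp_all
qed

lemma alg_run_length_le:
  assumes "1 \<le> t" and "t \<le> N" and "balanced N t \<mu>" and "alg_run N t \<mu> f k"
  shows "k \<le> N"
proof (cases "k \<le> 1")
  case False
  have growth: "i < k \<Longrightarrow> i \<le> card (settled N t (f i))" for i
    by (induction i) (use alg_run_settled_growth(1)[OF assms(1,3,4)] in fastforce)+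
  have "k - 2 \<le> card (settled N t (f (k - 2)))"
    using growth False by simp
  moreover have "card (settled N t (f (k - 2))) + 2 \<le> N"
    using alg_run_settled_growth(2)[OF assms(1,3,4), of "k - 2"] False by simp
  ultimately show ?thesis by linarith
qed (use assms(1,2) in simp)

theorem theorem3:
  fixes N t :: nat and \<mu> :: "nat \<Rightarrow> real"
  assumes "1 \<le> t" and "t \<le> N"
    and "\<And>n. n < N \<Longrightarrow> 0 < \<mu> n \<and> \<mu> n \<le> 1"
    and "(\<Sum>n<N. \<mu> n) = real t"
  shows "(\<forall>f k. alg_run N t \<mu> f k \<longrightarrow>
            k \<le> N \<and> (nonzero_state N (f k) \<longrightarrow> (\<exists>m'. alg_step N t (f k) m')))"
proof (intro allI impI conjI)
  have bal: "balanced N t \<mu>"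
    using assms(1,3,4) by (auto simp: balanced_def mult_left_le less_imp_le)
  fix f k assume run: "alg_run N t \<mu> f k"
  show "k \<le> N" using alg_run_length_le[OF assms(1,2) bal run] .
  show "\<exists>m'. alg_step N t (f k) m'" if "nonzero_state N (f k)"
    using alg_step_exists[OF alg_run_balanced[OF assms(1) bal run order_refl] that] .
qed

end
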